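(* Let $S=\bigcup_{e\in E(S)}G_e$ be a Clifford semigroup such that $E(S)$ is uniformly locally finite. Then $T=\begin{pmatrix}\ell^{1}(S)^{**}&\ell^{1}(S)^{**}\\0&\ell^{1}(S)^{**}\end{pmatrix}$ is not approximately biprojective.
   Context: A Clifford semigroup is an inverse semigroup in which $ss^*=s^*s$ for every $s$; $G_e=\{s: ss^*=s^*s=e\}$ is the maximal subgroup at the idempotent $e$. $E(S)$ is the set of idempotents, ordered by $e\le f\iff e=ef=fe$, uniformly locally finite meaning $\sup_x|\{y: y\le x\}|<\infty$. $\ell^1(S)^{**}$ carries the first Arens product. For a Banach algebra $A$, $T=\begin{pmatrix}A&A\\0&A\end{pmatrix}$ is the algebra of upper triangular matrices with entries in $A$, matrix operations and norm $\|a\|+\|x\|+\|b\|$. A Banach algebra $B$ is approximately biprojective if there is a net $(\rho_\alpha)$ of continuous $B$-bimodule morphisms $B\to B\otimes_pB$ with $\pi_B\circ\rho_\alpha(b)\to b$ for all $b$, where $\pi_B(b\otimes c)=bc$. *)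

theory Defs
  imports Complex_Main
begin

definition inverse_semigroup :: "('s \<Rightarrow> 's \<Rightarrow> 's) \<Rightarrow> bool" where
  "inverse_semigroup mult \<longleftrightarrow>
     (\<forall>a b c. mult (mult a b) c = mult a (mult b c)) \<and>
     (\<forall>s. \<exists>!t. mult (mult s t) s = s \<and> mult (mult t s) t = t)"

definition sg_star :: "('s \<Rightarrow> 's \<Rightarrow> 's) \<Rightarrow> 's \<Rightarrow> 's" where
  "sg_star mult s = (THE t. mult (mult s t) s = s \<and> mult (mult t s) t = t)"

definition clifford_semigroup :: "('s \<Rightarrow> 's \<Rightarrow> 's) \<Rightarrow> bool" where
  "clifford_semigroup mult \<longleftrightarrow> inverse_semigroup mult \<and>
     (\<forall>s. mult s (sg_star mult s) = mult (sg_star mult s) s)"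

definition idempotents :: "('s \<Rightarrow> 's \<Rightarrow> 's) \<Rightarrow> 's set" where
  "idempotents mult = {e. mult e e = e}"

definition idem_le :: "('s \<Rightarrow> 's \<Rightarrow> 's) \<Rightarrow> 's \<Rightarrow> 's \<Rightarrow> bool" where
  "idem_le mult e f \<longleftrightarrow> e = mult e f \<and> e = mult f e"

definition uniformly_locally_finite :: "('s \<Rightarrow> 's \<Rightarrow> 's) \<Rightarrow> bool" where
  "uniformly_locally_finite mult \<longleftrightarrow>
     (\<exists>N::nat. \<forall>x\<in>idempotents mult.
        finite {y\<in>idempotents mult. idem_le mult y x} \<and>
        card {y\<in>idempotents mult. idem_le mult y x} \<le> N)"

section \<open>The bidual of l1(S) = dual of l-infinity(S), with the first Arens product\<close>

definition linf :: "('s \<Rightarrow> complex) set" where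
  "linf = {f. \<exists>K. \<forall>s. cmod (f s) \<le> K}"

definition linf_norm :: "('s \<Rightarrow> complex) \<Rightarrow> real" where
  "linf_norm f = (SUP s. cmod (f s))"

type_synonym 's bid = "('s \<Rightarrow> complex) \<Rightarrow> complex"

definition bidual :: "'s bid set" where
  "bidual = {m. (\<forall>f\<in>linf. \<forall>g\<in>linf. m (\<lambda>s. f s + g s) = m f + m g) \<and>
               (\<forall>c. \<forall>f\<in>linf. m (\<lambda>s. c * f s) = c * m f) \<and>
               (\<exists>K. \<forall>f\<in>linf. cmod (m f) \<le> K * linf_norm f) \<and>
               (\<forall>f. f \<notin> linf \<longrightarrow> m f = 0)}"

definition bid_norm :: "'s bid \<Rightarrow> real" where
  "bid_norm m = Sup {cmod (m f) | f. f \<in> linf \<and> linf_norm f \<le> 1}"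

definition bid_add :: "'s bid \<Rightarrow> 's bid \<Rightarrow> 's bid" where
  "bid_add m n = (\<lambda>f. m f + n f)"

definition bid_scale :: "complex \<Rightarrow> 's bid \<Rightarrow> 's bid" where
  "bid_scale c m = (\<lambda>f. c * m f)"

definition arens :: "('s \<Rightarrow> 's \<Rightarrow> 's) \<Rightarrow> 's bid \<Rightarrow> 's bid \<Rightarrow> 's bid" where
  "arens mult m n = (\<lambda>f. if f \<in> linf then m (\<lambda>s. n (\<lambda>t. f (mult s t))) else 0)"

section \<open>Upper triangular matrix algebra T over l1(S)**; (a,x,b) stands for [[a,x],[0,b]]\<close>

type_synonym 's tri = "'s bid \<times> 's bid \<times> 's bid"

definition T_carrier :: "'s tri set" where
  "T_carrier = bidual \<times> bidual \<times> bidual"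

definition T_zero :: "'s tri" where
  "T_zero = ((\<lambda>f. 0), (\<lambda>f. 0), (\<lambda>f. 0))"

definition T_add :: "'s tri \<Rightarrow> 's tri \<Rightarrow> 's tri" where
  "T_add u v = (bid_add (fst u) (fst v), bid_add (fst (snd u)) (fst (snd v)),
                bid_add (snd (snd u)) (snd (snd v)))"

definition T_scale :: "complex \<Rightarrow> 's tri \<Rightarrow> 's tri" where
  "T_scale c u = (bid_scale c (fst u), bid_scale c (fst (snd u)), bid_scale c (snd (snd u)))"

definition T_mult :: "('s \<Rightarrow> 's \<Rightarrow> 's) \<Rightarrow> 's tri \<Rightarrow> 's tri \<Rightarrow> 's tri" where
  "T_mult mult u v =
     (arens mult (fst u) (fst v),
      bid_add (arens mult (fst u) (fst (snd v))) (arens mult (fst (snd u)) (snd (snd v))),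
      arens mult (snd (snd u)) (snd (snd v)))"

definition T_norm :: "'s tri \<Rightarrow> real" where
  "T_norm u = bid_norm (fst u) + bid_norm (fst (snd u)) + bid_norm (snd (snd u))"

text \<open>B \<otimes>_p B is modelled by its isometric image in the dual of the space of bounded
  bilinear forms on B (its own dual): the norm closure of the span of elementary tensors.\<close>

definition bil :: "'a set \<Rightarrow> ('a \<Rightarrow> 'a \<Rightarrow> 'a) \<Rightarrow> (complex \<Rightarrow> 'a \<Rightarrow> 'a) \<Rightarrow> ('a \<Rightarrow> real)
                   \<Rightarrow> ('a \<Rightarrow> 'a \<Rightarrow> complex) \<Rightarrow> bool" where
  "bil C p sc nm \<beta> \<longleftrightarrow>
     (\<forall>x\<in>C. \<forall>y\<in>C. \<forall>w\<in>C. \<beta> (p x y) w = \<beta> x w + \<beta> y w \<and> \<beta> w (p x y) = \<beta> w x + \<beta> w y) \<and>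
     (\<forall>c. \<forall>x\<in>C. \<forall>y\<in>C. \<beta> (sc c x) y = c * \<beta> x y \<and> \<beta> x (sc c y) = c * \<beta> x y) \<and>
     (\<exists>K. \<forall>x\<in>C. \<forall>y\<in>C. cmod (\<beta> x y) \<le> K * nm x * nm y) \<and>
     (\<forall>x y. x \<notin> C \<or> y \<notin> C \<longrightarrow> \<beta> x y = 0)"

definition bil_norm :: "'a set \<Rightarrow> ('a \<Rightarrow> real) \<Rightarrow> ('a \<Rightarrow> 'a \<Rightarrow> complex) \<Rightarrow> real" where
  "bil_norm C nm \<beta> = Sup {cmod (\<beta> x y) | x y. x \<in> C \<and> y \<in> C \<and> nm x \<le> 1 \<and> nm y \<le> 1}"

type_synonym 'a tens = "('a \<Rightarrow> 'a \<Rightarrow> complex) \<Rightarrow> complex"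

text \<open>Value of the algebraic tensor sum_i x_i \<otimes> y_i at a bilinear form.\<close>
definition tsum :: "('a \<times> 'a) list \<Rightarrow> 'a tens" where
  "tsum L = (\<lambda>\<beta>. sum_list (map (\<lambda>(x, y). \<beta> x y) L))"

definition tclose :: "'a set \<Rightarrow> ('a \<Rightarrow> 'a \<Rightarrow> 'a) \<Rightarrow> (complex \<Rightarrow> 'a \<Rightarrow> 'a) \<Rightarrow> ('a \<Rightarrow> real)
                      \<Rightarrow> 'a tens \<Rightarrow> ('a \<times> 'a) list \<Rightarrow> real \<Rightarrow> bool" where
  "tclose C p sc nm u L eps \<longleftrightarrow>
     (\<forall>\<beta>. bil C p sc nm \<beta> \<and> bil_norm C nm \<beta> \<le> 1 \<longrightarrow> cmod (u \<beta> - tsum L \<beta>) \<le> eps)"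

definition proj_tensor :: "'a set \<Rightarrow> ('a \<Rightarrow> 'a \<Rightarrow> 'a) \<Rightarrow> (complex \<Rightarrow> 'a \<Rightarrow> 'a) \<Rightarrow> ('a \<Rightarrow> real)
                           \<Rightarrow> 'a tens set" where
  "proj_tensor C p sc nm =
     {u. (\<forall>\<beta>. \<not> bil C p sc nm \<beta> \<longrightarrow> u \<beta> = 0) \<and>
         (\<forall>eps>0. \<exists>L. set L \<subseteq> C \<times> C \<and> tclose C p sc nm u L eps)}"

text \<open>Multiplication map pi_B, defined on elementary tensors and extended by continuity.\<close>
definition lsum :: "'a \<Rightarrow> ('a \<Rightarrow> 'a \<Rightarrow> 'a) \<Rightarrow> ('a \<Rightarrow> 'a \<Rightarrow> 'a) \<Rightarrow> ('a \<times> 'a) list \<Rightarrow> 'a" where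
  "lsum z p m L = foldr (\<lambda>(x, y) acc. p (m x y) acc) L z"

definition pi_rel :: "'a set \<Rightarrow> 'a \<Rightarrow> ('a \<Rightarrow> 'a \<Rightarrow> 'a) \<Rightarrow> (complex \<Rightarrow> 'a \<Rightarrow> 'a)
                      \<Rightarrow> ('a \<Rightarrow> 'a \<Rightarrow> 'a) \<Rightarrow> ('a \<Rightarrow> real) \<Rightarrow> 'a tens \<Rightarrow> 'a \<Rightarrow> bool" where
  "pi_rel C z p sc m nm u x \<longleftrightarrow> x \<in> C \<and>
     (\<forall>eps>0. \<exists>L. set L \<subseteq> C \<times> C \<and> tclose C p sc nm u L eps \<and>
                  nm (p x (sc (-1) (lsum z p m L))) \<le> eps)"

definition pi_B :: "'a set \<Rightarrow> 'a \<Rightarrow> ('a \<Rightarrow> 'a \<Rightarrow> 'a) \<Rightarrow> (complex \<Rightarrow> 'a \<Rightarrow> 'a)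
                    \<Rightarrow> ('a \<Rightarrow> 'a \<Rightarrow> 'a) \<Rightarrow> ('a \<Rightarrow> real) \<Rightarrow> 'a tens \<Rightarrow> 'a" where
  "pi_B C z p sc m nm u = (THE x. pi_rel C z p sc m nm u x)"

text \<open>Bimodule actions: a.(x \<otimes> y) = (a x) \<otimes> y and (x \<otimes> y).a = x \<otimes> (y a).\<close>
definition lmod :: "'a set \<Rightarrow> ('a \<Rightarrow> 'a \<Rightarrow> 'a) \<Rightarrow> (complex \<Rightarrow> 'a \<Rightarrow> 'a) \<Rightarrow> ('a \<Rightarrow> 'a \<Rightarrow> 'a)
                    \<Rightarrow> ('a \<Rightarrow> real) \<Rightarrow> 'a \<Rightarrow> 'a tens \<Rightarrow> 'a tens" where
  "lmod C p sc m nm a u = (\<lambda>\<beta>. if bil C p sc nm \<beta>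
       then u (\<lambda>x y. if x \<in> C \<and> y \<in> C then \<beta> (m a x) y else 0) else 0)"

definition rmod :: "'a set \<Rightarrow> ('a \<Rightarrow> 'a \<Rightarrow> 'a) \<Rightarrow> (complex \<Rightarrow> 'a \<Rightarrow> 'a) \<Rightarrow> ('a \<Rightarrow> 'a \<Rightarrow> 'a)
                    \<Rightarrow> ('a \<Rightarrow> real) \<Rightarrow> 'a tens \<Rightarrow> 'a \<Rightarrow> 'a tens" where
  "rmod C p sc m nm u a = (\<lambda>\<beta>. if bil C p sc nm \<beta>
       then u (\<lambda>x y. if x \<in> C \<and> y \<in> C then \<beta> x (m y a) else 0) else 0)"

definition bimod_morph :: "'a set \<Rightarrow> ('a \<Rightarrow> 'a \<Rightarrow> 'a) \<Rightarrow> (complex \<Rightarrow> 'a \<Rightarrow> 'a) \<Rightarrow> ('a \<Rightarrow> 'a \<Rightarrow> 'a)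
                    \<Rightarrow> ('a \<Rightarrow> real) \<Rightarrow> ('a \<Rightarrow> 'a tens) \<Rightarrow> bool" where
  "bimod_morph C p sc m nm \<rho> \<longleftrightarrow>
     (\<forall>b\<in>C. \<rho> b \<in> proj_tensor C p sc nm) \<and>
     (\<forall>a\<in>C. \<forall>b\<in>C. \<rho> (p a b) = (\<lambda>\<beta>. \<rho> a \<beta> + \<rho> b \<beta>)) \<and>
     (\<forall>c. \<forall>a\<in>C. \<rho> (sc c a) = (\<lambda>\<beta>. c * \<rho> a \<beta>)) \<and>
     (\<exists>K. \<forall>b\<in>C. \<forall>\<beta>. bil C p sc nm \<beta> \<and> bil_norm C nm \<beta> \<le> 1 \<longrightarrow> cmod (\<rho> b \<beta>) \<le> K * nm b) \<and>
     (\<forall>a\<in>C. \<forall>b\<in>C. \<rho> (m a b) = lmod C p sc m nm a (\<rho> b) \<and>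
                   \<rho> (m b a) = rmod C p sc m nm (\<rho> b) a)"

text \<open>Approximate biprojectivity, with nets indexed by a directed set I of (arbitrary) type 'i.\<close>
definition approx_biprojective :: "'i itself \<Rightarrow> 'a set \<Rightarrow> 'a \<Rightarrow> ('a \<Rightarrow> 'a \<Rightarrow> 'a)
      \<Rightarrow> (complex \<Rightarrow> 'a \<Rightarrow> 'a) \<Rightarrow> ('a \<Rightarrow> 'a \<Rightarrow> 'a) \<Rightarrow> ('a \<Rightarrow> real) \<Rightarrow> bool" where
  "approx_biprojective (_ :: 'i itself) C z p sc m nm \<longleftrightarrow>
     (\<exists>(I :: 'i set) le (\<rho> :: 'i \<Rightarrow> 'a \<Rightarrow> 'a tens).
        I \<noteq> {} \<and> (\<forall>i\<in>I. le i i) \<and>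
        (\<forall>i\<in>I. \<forall>j\<in>I. \<forall>k\<in>I. le i j \<and> le j k \<longrightarrow> le i k) \<and>
        (\<forall>i\<in>I. \<forall>j\<in>I. \<exists>k\<in>I. le i k \<and> le j k) \<and>
        (\<forall>i\<in>I. bimod_morph C p sc m nm (\<rho> i)) \<and>
        (\<forall>b\<in>C. \<forall>eps>0. \<exists>i0\<in>I. \<forall>i\<in>I. le i0 i \<longrightarrow>
            nm (p (pi_B C z p sc m nm (\<rho> i b)) (sc (-1) b)) < eps))"

end

theory Submission
  imports Defs
begin

text \<open>The augmentation \<open>\<psi>(m) = \<langle>m, 1\<rangle>\<close> is a character of \<open>\<ell>\<^sup>1(S)\<^sup>*\<^sup>*\<close> for the first Arens
  product, so \<open>(a, x, b) \<mapsto> \<psi>(b)\<close> is a character of \<open>T\<close>. Let \<open>E = \<delta>\<^sub>e\<close> for an idempotent \<open>e\<close> of \<open>S\<close>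
  and let \<open>P\<close>, \<open>X\<close>, \<open>Q\<close> be \<open>E\<close> placed in the upper left, upper right and lower right corner.
  From \<open>XQ = X = PX\<close>, every bimodule morphism \<open>\<rho> : T \<rightarrow> T \<otimes>\<^sub>p T\<close> satisfies
  \<open>\<langle>\<rho>(Q), \<psi>\<^sub>2\<^sub>2 \<otimes> \<psi>\<^sub>2\<^sub>2\<rangle> = \<langle>\<rho>(X), \<psi>\<^sub>1\<^sub>2 \<otimes> \<psi>\<^sub>2\<^sub>2\<rangle> = \<langle>\<rho>(P), 0\<rangle> = 0\<close>, where \<open>\<psi>\<^sub>i\<^sub>j\<close> is \<open>\<psi>\<close> of the
  \<open>(i,j)\<close> entry. The left-hand side is \<open>\<psi>\<close> of the lower right entry of \<open>\<pi>\<^sub>T(\<rho>(Q))\<close>, whereas that of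
  \<open>Q\<close> is 1, so \<open>\<parallel>\<pi>\<^sub>T(\<rho>(Q)) - Q\<parallel> \<ge> 1\<close> for every \<open>\<rho>\<close>.

  Because \<open>\<pi>\<^sub>T\<close> is specified only as the limit of products of approximating finite tensors, its
  existence has to be shown: the \<open>k\<close>-th entry of \<open>\<pi>\<^sub>T(u)\<close> is \<open>f \<mapsto> \<langle>u, (a, b) \<mapsto> \<langle>(ab)\<^sub>k, f\<rangle>\<rangle>\<close>,
  which lies in the bidual because it is a uniform limit of bidual elements.\<close>

section \<open>The bidual of \<open>\<ell>\<^sup>1(S)\<close> and the first Arens product\<close>

lemma linf_bdd_above: "f \<in> linf \<Longrightarrow> bdd_above (range (\<lambda>s. cmod (f s)))"
  unfolding linf_def bdd_above_def by auto

lemma norm_le_linf_norm: "f \<in> linf \<Longrightarrow> cmod (f s) \<le> linf_norm f"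
  unfolding linf_norm_def by (rule cSUP_upper) (auto simp: linf_bdd_above)

lemma linf_norm_le: "(\<And>s. cmod (f s) \<le> B) \<Longrightarrow> linf_norm f \<le> B"
  unfolding linf_norm_def by (rule cSUP_least) auto

lemma linf_norm_nonneg: "f \<in> linf \<Longrightarrow> 0 \<le> linf_norm f"
  using norm_le_linf_norm[of f undefined] norm_ge_zero order_trans by blast

lemma linf_norm_eq_0_iff: "f \<in> linf \<Longrightarrow> linf_norm f \<le> 0 \<longleftrightarrow> f = (\<lambda>s. 0)"
proof
  assume "f \<in> linf" "linf_norm f \<le> 0"
  then have "cmod (f s) \<le> 0" for s using norm_le_linf_norm[of f s] by linarith
  then show "f = (\<lambda>s. 0)" by auto
qed (auto intro: linf_norm_le)

lemma const_in_linf: "(\<lambda>s. c) \<in> linf"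
  unfolding linf_def by auto

lemma add_in_linf:
  assumes "f \<in> linf" "g \<in> linf"
  shows "(\<lambda>s. f s + g s) \<in> linf"
proof -
  obtain K L where "\<And>s. cmod (f s) \<le> K" "\<And>s. cmod (g s) \<le> L"
    using assms unfolding linf_def by auto
  then have "cmod (f s + g s) \<le> K + L" for s
    by (meson add_mono norm_triangle_ineq order_trans)
  then show ?thesis unfolding linf_def by auto
qed

lemma scale_in_linf:
  assumes "f \<in> linf"
  shows "(\<lambda>s. c * f s) \<in> linf"
proof -
  obtain K where "\<And>s. cmod (f s) \<le> K" using assms unfolding linf_def by auto
  then have "cmod (c * f s) \<le> cmod c * K" for s by (simp add: norm_mult mult_left_mono)
  then show ?thesis unfolding linf_def by auto
qed

lemma translate_in_linf: "f \<in> linf \<Longrightarrow> (\<lambda>t. f (mult s t)) \<in> linf"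
  unfolding linf_def by auto

lemma linf_norm_translate_le: "f \<in> linf \<Longrightarrow> linf_norm (\<lambda>t. f (mult s t)) \<le> linf_norm f"
  by (rule linf_norm_le) (simp add: norm_le_linf_norm)

lemma linf_norm_normalize_le_1:
  assumes "f \<in> linf" "r > 0" "linf_norm f \<le> r"
  shows "linf_norm (\<lambda>s. of_real (1 / r) * f s) \<le> 1"
proof (rule linf_norm_le)
  fix s
  have "cmod (of_real (1 / r) * f s) = cmod (f s) / r" using assms(2) by (simp add: norm_mult norm_divide)
  also have "\<dots> \<le> 1" using norm_le_linf_norm[OF assms(1), of s] assms(2,3) by simp
  finally show "cmod (of_real (1 / r) * f s) \<le> 1" .
qed

lemma bidualD:
  assumes "m \<in> bidual"
  shows "\<And>f g. f \<in> linf \<Longrightarrow> g \<in> linf \<Longrightarrow> m (\<lambda>s. f s + g s) = m f + m g"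
    and "\<And>c f. f \<in> linf \<Longrightarrow> m (\<lambda>s. c * f s) = c * m f"
    and "\<exists>K. \<forall>f\<in>linf. cmod (m f) \<le> K * linf_norm f"
    and "\<And>f. f \<notin> linf \<Longrightarrow> m f = 0"
  using assms unfolding bidual_def by auto

lemma bidual_apply_zero: "m \<in> bidual \<Longrightarrow> m (\<lambda>s. 0) = 0"
  using bidualD(2)[OF _ const_in_linf[of 0], of m 0] by simp

lemma bid_norm_bdd_above:
  assumes "m \<in> bidual"
  shows "bdd_above {cmod (m f) | f. f \<in> linf \<and> linf_norm f \<le> 1}"
proof -
  obtain K where K: "\<forall>f\<in>linf. cmod (m f) \<le> K * linf_norm f" using bidualD(3)[OF assms] by auto
  have "cmod (m f) \<le> \<bar>K\<bar>" if "f \<in> linf" "linf_norm f \<le> 1" for f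
  proof -
    have "K * linf_norm f \<le> \<bar>K\<bar> * linf_norm f"
      using linf_norm_nonneg[OF that(1)] by (simp add: mult_right_mono)
    also have "\<dots> \<le> \<bar>K\<bar>" using that(2) by (simp add: mult_left_le)
    finally show ?thesis using K that(1) by force
  qed
  then show ?thesis unfolding bdd_above_def by blast
qed

lemma norm_apply_le_bid_norm:
  "m \<in> bidual \<Longrightarrow> f \<in> linf \<Longrightarrow> linf_norm f \<le> 1 \<Longrightarrow> cmod (m f) \<le> bid_norm m"
  unfolding bid_norm_def by (rule cSup_upper) (auto simp: bid_norm_bdd_above)

lemma bid_norm_le:
  "(\<And>f. f \<in> linf \<Longrightarrow> linf_norm f \<le> 1 \<Longrightarrow> cmod (m f) \<le> B) \<Longrightarrow> bid_norm m \<le> B"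
  unfolding bid_norm_def
  by (rule cSup_least) (use const_in_linf[of 0] linf_norm_le[of "\<lambda>s. 0" 1] in auto)

lemma bid_norm_nonneg:
  fixes m :: "'s bid"
  assumes "m \<in> bidual"
  shows "0 \<le> bid_norm m"
proof -
  have "linf_norm (\<lambda>s::'s. 0::complex) \<le> 1" by (rule linf_norm_le) simp
  then show ?thesis using norm_apply_le_bid_norm[OF assms const_in_linf]
    by (meson norm_ge_zero order_trans)
qed

lemma norm_apply_le_bid_norm_mult:
  assumes m: "m \<in> bidual" and f: "f \<in> linf"
  shows "cmod (m f) \<le> bid_norm m * linf_norm f"
proof (cases "linf_norm f \<le> 0")
  case True
  then show ?thesis
    using linf_norm_eq_0_iff[OF f] bidual_apply_zero[OF m] bid_norm_nonneg[OF m] linf_norm_nonneg[OF f]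
    by simp
next
  case False
  define r where "r = linf_norm f"
  have r: "r > 0" using False r_def by simp
  have "cmod (m (\<lambda>s. of_real (1 / r) * f s)) \<le> bid_norm m"
    by (rule norm_apply_le_bid_norm[OF m scale_in_linf[OF f] linf_norm_normalize_le_1[OF f r]])
      (simp add: r_def)
  moreover have "m (\<lambda>s. of_real (1 / r) * f s) = of_real (1 / r) * m f"
    using bidualD(2)[OF m f] .
  ultimately have "cmod (m f) / r \<le> bid_norm m"
    using r by (simp add: norm_mult norm_divide)
  then show ?thesis using r r_def by (simp add: field_simps)
qed

lemma zero_in_bidual: "(\<lambda>f. 0) \<in> bidual"
  unfolding bidual_def by (auto intro: exI[of _ 0])

lemma bid_add_in_bidual:
  assumes m: "m \<in> bidual" and n: "n \<in> bidual"
  shows "bid_add m n \<in> bidual"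
proof -
  have "cmod (m f + n f) \<le> (bid_norm m + bid_norm n) * linf_norm f" if "f \<in> linf" for f
    using norm_triangle_ineq[of "m f" "n f"] norm_apply_le_bid_norm_mult[OF m that]
      norm_apply_le_bid_norm_mult[OF n that]
    by (simp add: distrib_right)
  then show ?thesis using m n unfolding bid_add_def
    by (subst bidual_def) (auto simp: bidualD distrib_left)
qed

lemma bid_scale_in_bidual:
  assumes m: "m \<in> bidual"
  shows "bid_scale c m \<in> bidual"
proof -
  have "cmod (c * m f) \<le> (cmod c * bid_norm m) * linf_norm f" if "f \<in> linf" for f
    using norm_apply_le_bid_norm_mult[OF m that] by (simp add: norm_mult mult.assoc mult_left_mono)
  then show ?thesis using m unfolding bid_scale_def
    by (subst bidual_def) (auto simp: bidualD distrib_left mult.left_commute)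
qed

lemma arens_inner_in_linf:
  assumes n: "n \<in> bidual" and f: "f \<in> linf"
  shows "(\<lambda>s. n (\<lambda>t. f (mult s t))) \<in> linf"
    and "linf_norm (\<lambda>s. n (\<lambda>t. f (mult s t))) \<le> bid_norm n * linf_norm f"
proof -
  have bound: "cmod (n (\<lambda>t. f (mult s t))) \<le> bid_norm n * linf_norm f" for s
    using norm_apply_le_bid_norm_mult[OF n translate_in_linf[OF f]]
      mult_left_mono[OF linf_norm_translate_le[OF f, of mult s] bid_norm_nonneg[OF n]]
    by (rule order_trans)
  then show "(\<lambda>s. n (\<lambda>t. f (mult s t))) \<in> linf" unfolding linf_def by auto
  show "linf_norm (\<lambda>s. n (\<lambda>t. f (mult s t))) \<le> bid_norm n * linf_norm f"
    by (rule linf_norm_le) (rule bound)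
qed

lemma norm_arens_le:
  assumes m: "m \<in> bidual" and n: "n \<in> bidual" and f: "f \<in> linf"
  shows "cmod (arens mult m n f) \<le> bid_norm m * bid_norm n * linf_norm f"
proof -
  have "cmod (arens mult m n f) = cmod (m (\<lambda>s. n (\<lambda>t. f (mult s t))))"
    using f by (simp add: arens_def)
  also have "\<dots> \<le> bid_norm m * linf_norm (\<lambda>s. n (\<lambda>t. f (mult s t)))"
    using norm_apply_le_bid_norm_mult[OF m arens_inner_in_linf(1)[OF n f]] .
  also have "\<dots> \<le> bid_norm m * (bid_norm n * linf_norm f)"
    using mult_left_mono[OF arens_inner_in_linf(2)[OF n f] bid_norm_nonneg[OF m]] .
  finally show ?thesis by (simp add: mult.assoc)
qed

lemma arens_add_right:
  assumes m: "m \<in> bidual" and n: "n \<in> bidual" and n': "n' \<in> bidual"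
  shows "arens mult m (bid_add n n') = bid_add (arens mult m n) (arens mult m n')"
proof
  fix f show "arens mult m (bid_add n n') f = bid_add (arens mult m n) (arens mult m n') f"
    using bidualD(1)[OF m arens_inner_in_linf(1)[OF n, of f mult] arens_inner_in_linf(1)[OF n', of f mult]]
    by (simp add: arens_def bid_add_def)
qed

lemma arens_scale_right:
  assumes m: "m \<in> bidual" and n: "n \<in> bidual"
  shows "arens mult m (bid_scale c n) = bid_scale c (arens mult m n)"
proof
  fix f show "arens mult m (bid_scale c n) f = bid_scale c (arens mult m n) f"
    using bidualD(2)[OF m arens_inner_in_linf(1)[OF n, of f mult]]
    by (simp add: arens_def bid_scale_def)
qed

lemma arens_add_left: "arens mult (bid_add m m') n = bid_add (arens mult m n) (arens mult m' n)"
  by (simp add: arens_def bid_add_def fun_eq_iff)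

lemma arens_scale_left: "arens mult (bid_scale c m) n = bid_scale c (arens mult m n)"
  by (simp add: arens_def bid_scale_def fun_eq_iff)

lemma arens_zero_left: "arens mult (\<lambda>f. 0) n = (\<lambda>f. 0)"
  by (simp add: arens_def fun_eq_iff)

lemma arens_zero_right: "m \<in> bidual \<Longrightarrow> arens mult m (\<lambda>f. 0) = (\<lambda>f. 0)"
  by (simp add: arens_def fun_eq_iff bidual_apply_zero)

lemma arens_in_bidual:
  assumes m: "m \<in> bidual" and n: "n \<in> bidual"
  shows "arens mult m n \<in> bidual"
proof -
  have "arens mult m n (\<lambda>s. f s + g s) = arens mult m n f + arens mult m n g"
    if f: "f \<in> linf" and g: "g \<in> linf" for f g
  proof -
    have "(\<lambda>s. n (\<lambda>t. f (mult s t) + g (mult s t))) =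
          (\<lambda>s. n (\<lambda>t. f (mult s t)) + n (\<lambda>t. g (mult s t)))"
    proof
      fix s show "n (\<lambda>t. f (mult s t) + g (mult s t)) = n (\<lambda>t. f (mult s t)) + n (\<lambda>t. g (mult s t))"
        using bidualD(1)[OF n translate_in_linf[OF f, of mult s] translate_in_linf[OF g, of mult s]] .
    qed
    then show ?thesis
      using add_in_linf[OF f g] f g
        bidualD(1)[OF m arens_inner_in_linf(1)[OF n f] arens_inner_in_linf(1)[OF n g]]
      by (simp add: arens_def)
  qed
  moreover have "arens mult m n (\<lambda>s. c * f s) = c * arens mult m n f" if f: "f \<in> linf" for c f
  proof -
    have "(\<lambda>s. n (\<lambda>t. c * f (mult s t))) = (\<lambda>s. c * n (\<lambda>t. f (mult s t)))"
    proof
      fix s show "n (\<lambda>t. c * f (mult s t)) = c * n (\<lambda>t. f (mult s t))"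
        using bidualD(2)[OF n translate_in_linf[OF f, of mult s]] .
    qed
    then show ?thesis
      using f scale_in_linf[OF f] bidualD(2)[OF m arens_inner_in_linf(1)[OF n f]]
      by (simp add: arens_def)
  qed
  moreover have "\<forall>f\<in>linf. cmod (arens mult m n f) \<le> (bid_norm m * bid_norm n) * linf_norm f"
    using norm_arens_le[OF m n] by auto
  ultimately show ?thesis unfolding bidual_def by (auto simp: arens_def)
qed


lemma complex_eqI_norm_diff_le:
  fixes a b :: complex
  assumes "\<And>e. e > 0 \<Longrightarrow> cmod (a - b) \<le> M * e"
  shows "a = b"
proof (rule ccontr)
  assume "a \<noteq> b"
  then have d: "cmod (a - b) > 0" by simp
  define e where "e = cmod (a - b) / (2 * (\<bar>M\<bar> + 1))"
  have e: "e > 0" using d by (simp add: e_def add_pos_nonneg)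
  have "cmod (a - b) \<le> M * e" using assms e by blast
  also have "\<dots> \<le> (\<bar>M\<bar> + 1) * e" using e by (intro mult_right_mono) auto
  also have "\<dots> = cmod (a - b) / 2" unfolding e_def by (simp add: field_simps add_pos_nonneg)
  finally show False using d by simp
qed

definition uniformly_approximable :: "'s bid \<Rightarrow> bool" where
  "uniformly_approximable X \<longleftrightarrow> (\<forall>eps>0. \<exists>c\<in>bidual.
     \<forall>f\<in>linf. \<forall>r>0. linf_norm f \<le> r \<longrightarrow> cmod (X f - c f) \<le> r * eps)"

lemma uniformly_approximableE:
  assumes "uniformly_approximable X" "e > 0"
  obtains c where "c \<in> bidual" "\<And>h. h \<in> linf \<Longrightarrow> cmod (X h - c h) \<le> (linf_norm h + 1) * e"
proof -
  obtain c where c: "c \<in> bidual"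
    and close: "\<forall>f\<in>linf. \<forall>r>0. linf_norm f \<le> r \<longrightarrow> cmod (X f - c f) \<le> r * e"
    using assms unfolding uniformly_approximable_def by blast
  have "cmod (X h - c h) \<le> (linf_norm h + 1) * e" if "h \<in> linf" for h
    using close that linf_norm_nonneg[OF that] by (simp add: add_pos_nonneg)
  then show ?thesis using c that by blast
qed

lemma uniformly_approximable_add:
  assumes X: "uniformly_approximable X" and f: "f \<in> linf" and g: "g \<in> linf"
  shows "X (\<lambda>s. f s + g s) = X f + X g"
proof -
  have fg: "(\<lambda>s. f s + g s) \<in> linf" using add_in_linf[OF f g] .
  let ?r = "\<lambda>h. linf_norm h + 1"
  have "X (\<lambda>s. f s + g s) - (X f + X g) = 0"
  proof (rule complex_eqI_norm_diff_le[where M = "?r (\<lambda>s. f s + g s) + ?r f + ?r g"])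
    fix e :: real assume "e > 0"
    then obtain c where c: "c \<in> bidual" and close: "\<And>h. h \<in> linf \<Longrightarrow> cmod (X h - c h) \<le> ?r h * e"
      using uniformly_approximableE[OF X] by blast
    have "X (\<lambda>s. f s + g s) - (X f + X g) - 0
        = (X (\<lambda>s. f s + g s) - c (\<lambda>s. f s + g s)) - (X f - c f) - (X g - c g)"
      using bidualD(1)[OF c f g] by simp
    also have "cmod \<dots> \<le> cmod (X (\<lambda>s. f s + g s) - c (\<lambda>s. f s + g s)) + cmod (X f - c f)
        + cmod (X g - c g)"
      by (rule order_trans[OF norm_triangle_ineq4 add_right_mono[OF norm_triangle_ineq4]])
    also have "\<dots> \<le> (?r (\<lambda>s. f s + g s) + ?r f + ?r g) * e"
      using close[OF fg] close[OF f] close[OF g] by (simp add: distrib_right)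
    finally show "cmod (X (\<lambda>s. f s + g s) - (X f + X g) - 0)
        \<le> (?r (\<lambda>s. f s + g s) + ?r f + ?r g) * e" .
  qed
  then show ?thesis by simp
qed

lemma uniformly_approximable_scale:
  assumes X: "uniformly_approximable X" and f: "f \<in> linf"
  shows "X (\<lambda>s. a * f s) = a * X f"
proof -
  have af: "(\<lambda>s. a * f s) \<in> linf" using scale_in_linf[OF f] .
  let ?r = "\<lambda>h. linf_norm h + 1"
  show ?thesis
  proof (rule complex_eqI_norm_diff_le[where M = "?r (\<lambda>s. a * f s) + cmod a * ?r f"])
    fix e :: real assume "e > 0"
    then obtain c where c: "c \<in> bidual" and close: "\<And>h. h \<in> linf \<Longrightarrow> cmod (X h - c h) \<le> ?r h * e"
      using uniformly_approximableE[OF X] by blast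
    have "X (\<lambda>s. a * f s) - a * X f = (X (\<lambda>s. a * f s) - c (\<lambda>s. a * f s)) - a * (X f - c f)"
      using bidualD(2)[OF c f] by (simp add: algebra_simps)
    also have "cmod \<dots> \<le> cmod (X (\<lambda>s. a * f s) - c (\<lambda>s. a * f s)) + cmod a * cmod (X f - c f)"
      using norm_triangle_ineq4[of "X (\<lambda>s. a * f s) - c (\<lambda>s. a * f s)" "a * (X f - c f)"]
      by (simp add: norm_mult)
    also have "\<dots> \<le> ?r (\<lambda>s. a * f s) * e + cmod a * (?r f * e)"
      using close[OF af] close[OF f] by (intro add_mono mult_left_mono) auto
    finally show "cmod (X (\<lambda>s. a * f s) - a * X f) \<le> (?r (\<lambda>s. a * f s) + cmod a * ?r f) * e"
      by (simp add: algebra_simps)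
  qed
qed

lemma uniformly_approximable_bounded:
  assumes X: "uniformly_approximable X"
  shows "\<exists>K. \<forall>f\<in>linf. cmod (X f) \<le> K * linf_norm f"
proof -
  obtain c where c: "c \<in> bidual"
    and close: "\<And>f r. f \<in> linf \<Longrightarrow> r > 0 \<Longrightarrow> linf_norm f \<le> r \<Longrightarrow> cmod (X f - c f) \<le> r"
    using X unfolding uniformly_approximable_def by (metis mult.right_neutral zero_less_one)
  have "cmod (X f) \<le> (bid_norm c + 1) * linf_norm f" if f: "f \<in> linf" for f
  proof (cases "linf_norm f \<le> 0")
    case True
    moreover have "X (\<lambda>s. 0) = 0"
      using uniformly_approximable_scale[OF X const_in_linf[of 0], of 0] by simp
    ultimately have "X f = 0" using linf_norm_eq_0_iff[OF f] by simp
    then show ?thesis using linf_norm_nonneg[OF f] bid_norm_nonneg[OF c] by simp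
  next
    case False
    have "cmod (X f) \<le> cmod (X f - c f) + cmod (c f)"
      using norm_triangle_ineq[of "X f - c f" "c f"] by simp
    also have "\<dots> \<le> linf_norm f + bid_norm c * linf_norm f"
      using close[OF f, of "linf_norm f"] False norm_apply_le_bid_norm_mult[OF c f] by simp
    finally show ?thesis by (simp add: algebra_simps)
  qed
  then show ?thesis by blast
qed

lemma bidual_if_uniformly_approximable:
  assumes "uniformly_approximable X" "\<And>f. f \<notin> linf \<Longrightarrow> X f = 0"
  shows "X \<in> bidual"
  unfolding bidual_def
  using assms uniformly_approximable_add uniformly_approximable_scale uniformly_approximable_bounded
  by blast

definition point_mass :: "'s \<Rightarrow> 's bid" where
  "point_mass s = (\<lambda>f. if f \<in> linf then f s else 0)"

definition augmentation :: "'s bid \<Rightarrow> complex" where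
  "augmentation m = m (\<lambda>s. 1)"

lemma point_mass_in_bidual: "point_mass s \<in> bidual"
proof -
  have "\<forall>f\<in>linf. cmod (point_mass s f) \<le> 1 * linf_norm f"
    by (simp add: point_mass_def norm_le_linf_norm)
  then show ?thesis unfolding bidual_def by (fastforce simp: point_mass_def add_in_linf scale_in_linf)
qed

lemma arens_point_mass: "arens mult (point_mass s) (point_mass t) = point_mass (mult s t)"
proof
  fix f show "arens mult (point_mass s) (point_mass t) f = point_mass (mult s t) f"
  proof (cases "f \<in> linf")
    case True
    have "(\<lambda>r. f (mult r t)) \<in> linf" using True unfolding linf_def by auto
    then show ?thesis using True by (simp add: arens_def point_mass_def translate_in_linf)
  qed (simp add: arens_def point_mass_def)
qed

lemma augmentation_point_mass: "augmentation (point_mass s) = 1"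
  by (simp add: augmentation_def point_mass_def const_in_linf)

lemma augmentation_arens:
  assumes "m \<in> bidual" "n \<in> bidual"
  shows "augmentation (arens mult m n) = augmentation m * augmentation n"
  using bidualD(2)[OF assms(1) const_in_linf, of "augmentation n" 1]
  by (simp add: augmentation_def arens_def const_in_linf)

lemma norm_augmentation_le: "m \<in> bidual \<Longrightarrow> cmod (augmentation m) \<le> bid_norm m"
  unfolding augmentation_def
  by (rule norm_apply_le_bid_norm[OF _ const_in_linf]) (assumption, rule linf_norm_le, simp)

section \<open>The triangular algebra\<close>

text \<open>Entries of \<open>(a, x, b)\<close> are numbered 0, 1, 2; every index above 2 also selects \<open>b\<close>.\<close>

definition entry :: "nat \<Rightarrow> 's tri \<Rightarrow> 's bid" where
  "entry k u = (if k = 0 then fst u else if k = 1 then fst (snd u) else snd (snd u))"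

lemma T_carrier_iff:
  "u \<in> T_carrier \<longleftrightarrow> fst u \<in> bidual \<and> fst (snd u) \<in> bidual \<and> snd (snd u) \<in> bidual"
  by (cases u) (auto simp: T_carrier_def)

lemma T_eqI:
  assumes "\<And>k. entry k x = entry k y"
  shows "x = y"
  using assms[of 0] assms[of 1] assms[of 2] by (simp add: entry_def prod_eq_iff)

lemma entry_in_bidual: "u \<in> T_carrier \<Longrightarrow> entry k u \<in> bidual"
  by (auto simp: entry_def T_carrier_iff)

lemma entry_T_add: "entry k (T_add u v) = bid_add (entry k u) (entry k v)"
  by (simp add: entry_def T_add_def)

lemma entry_T_scale: "entry k (T_scale c u) = bid_scale c (entry k u)"
  by (simp add: entry_def T_scale_def)

lemma entry_T_zero: "entry k T_zero = (\<lambda>f. 0)"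
  by (simp add: entry_def T_zero_def)

lemma entry_T_add_scale_apply: "entry k (T_add x (T_scale c y)) f = entry k x f + c * entry k y f"
  by (simp add: entry_T_add entry_T_scale bid_add_def bid_scale_def)

lemma T_zero_in_carrier: "T_zero \<in> T_carrier"
  by (simp add: T_carrier_iff T_zero_def zero_in_bidual)

lemma T_add_in_carrier: "u \<in> T_carrier \<Longrightarrow> v \<in> T_carrier \<Longrightarrow> T_add u v \<in> T_carrier"
  by (simp add: T_carrier_iff T_add_def bid_add_in_bidual)

lemma T_scale_in_carrier: "u \<in> T_carrier \<Longrightarrow> T_scale c u \<in> T_carrier"
  by (simp add: T_carrier_iff T_scale_def bid_scale_in_bidual)

lemma T_mult_in_carrier: "u \<in> T_carrier \<Longrightarrow> v \<in> T_carrier \<Longrightarrow> T_mult mult u v \<in> T_carrier"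
  by (simp add: T_carrier_iff T_mult_def bid_add_in_bidual arens_in_bidual)

lemma T_norm_eq: "T_norm v = bid_norm (entry 0 v) + bid_norm (entry 1 v) + bid_norm (entry 2 v)"
  by (simp add: T_norm_def entry_def)

lemma bid_norm_entry_le_T_norm: "u \<in> T_carrier \<Longrightarrow> bid_norm (entry k u) \<le> T_norm u"
  using bid_norm_nonneg[of "fst u"] bid_norm_nonneg[of "fst (snd u)"] bid_norm_nonneg[of "snd (snd u)"]
  by (auto simp: entry_def T_norm_def T_carrier_iff)

lemma T_norm_nonneg: "u \<in> T_carrier \<Longrightarrow> 0 \<le> T_norm u"
  using bid_norm_nonneg[of "fst u"] bid_norm_nonneg[of "fst (snd u)"] bid_norm_nonneg[of "snd (snd u)"]
  by (auto simp: T_norm_def T_carrier_iff)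

lemma T_norm_T_zero: "T_norm (T_zero :: 's tri) = 0"
proof -
  have "bid_norm (\<lambda>f::'s \<Rightarrow> complex. 0::complex) \<le> 0" by (rule bid_norm_le) simp
  moreover have "0 \<le> bid_norm (\<lambda>f::'s \<Rightarrow> complex. 0::complex)"
    using bid_norm_nonneg zero_in_bidual by blast
  ultimately show ?thesis by (simp add: T_norm_def T_zero_def)
qed

lemma norm_entry_apply_le: "v \<in> T_carrier \<Longrightarrow> f \<in> linf \<Longrightarrow> cmod (entry k v f) \<le> T_norm v * linf_norm f"
  using norm_apply_le_bid_norm_mult[OF entry_in_bidual[of v k]] bid_norm_entry_le_T_norm[of v k]
    linf_norm_nonneg[of f]
  by (meson mult_right_mono order_trans)

lemma entry_T_mult_add_left:
  assumes "a \<in> T_carrier" "a' \<in> T_carrier" "b \<in> T_carrier"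
  shows "entry k (T_mult mult (T_add a a') b) f = entry k (T_mult mult a b) f + entry k (T_mult mult a' b) f"
  using assms by (simp add: entry_def T_mult_def T_add_def arens_add_left T_carrier_iff)
    (simp add: bid_add_def add_ac)

lemma entry_T_mult_add_right:
  assumes "a \<in> T_carrier" "b \<in> T_carrier" "b' \<in> T_carrier"
  shows "entry k (T_mult mult a (T_add b b')) f = entry k (T_mult mult a b) f + entry k (T_mult mult a b') f"
  using assms by (simp add: entry_def T_mult_def T_add_def arens_add_right T_carrier_iff)
    (simp add: bid_add_def add_ac)

lemma entry_T_mult_scale_left:
  assumes "a \<in> T_carrier" "b \<in> T_carrier"
  shows "entry k (T_mult mult (T_scale c a) b) f = c * entry k (T_mult mult a b) f"
  using assms by (simp add: entry_def T_mult_def T_scale_def arens_scale_left)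
    (simp add: bid_add_def bid_scale_def distrib_left)

lemma entry_T_mult_scale_right:
  assumes "a \<in> T_carrier" "b \<in> T_carrier"
  shows "entry k (T_mult mult a (T_scale c b)) f = c * entry k (T_mult mult a b) f"
  using assms by (simp add: entry_def T_mult_def T_scale_def arens_scale_right T_carrier_iff)
    (simp add: bid_add_def bid_scale_def distrib_left)

lemma norm_entry_T_mult_le:
  assumes a: "a \<in> T_carrier" and b: "b \<in> T_carrier" and f: "f \<in> linf"
  shows "cmod (entry k (T_mult mult a b) f) \<le> T_norm a * T_norm b * linf_norm f"
proof -
  obtain a1 a2 a3 b1 b2 b3 where ab: "a = (a1, a2, a3)" "b = (b1, b2, b3)"
    by (cases a, cases b) auto
  have A: "a1 \<in> bidual" "a2 \<in> bidual" "a3 \<in> bidual" and B: "b1 \<in> bidual" "b2 \<in> bidual" "b3 \<in> bidual"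
    using a b ab by (auto simp: T_carrier_iff)
  have nonneg: "0 \<le> bid_norm a1" "0 \<le> bid_norm a2" "0 \<le> bid_norm a3"
    "0 \<le> bid_norm b1" "0 \<le> bid_norm b2" "0 \<le> bid_norm b3"
    using A B by (auto intro: bid_norm_nonneg)
  define S where "S = bid_norm a1 * bid_norm b1 + bid_norm a1 * bid_norm b2
    + bid_norm a2 * bid_norm b3 + bid_norm a3 * bid_norm b3"
  have "T_norm a * T_norm b = S + (bid_norm a1 * bid_norm b3 + bid_norm a2 * bid_norm b1
    + bid_norm a2 * bid_norm b2 + bid_norm a3 * bid_norm b1 + bid_norm a3 * bid_norm b2)"
    by (simp add: T_norm_def ab S_def algebra_simps)
  then have S_le: "S \<le> T_norm a * T_norm b"
    using nonneg by (simp add: add_nonneg_nonneg)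
  have terms: "cmod (arens mult a1 b1 f) \<le> bid_norm a1 * bid_norm b1 * linf_norm f"
    "cmod (arens mult a1 b2 f) \<le> bid_norm a1 * bid_norm b2 * linf_norm f"
    "cmod (arens mult a2 b3 f) \<le> bid_norm a2 * bid_norm b3 * linf_norm f"
    "cmod (arens mult a3 b3 f) \<le> bid_norm a3 * bid_norm b3 * linf_norm f"
    using A B f by (auto intro: norm_arens_le)
  have products_nonneg: "0 \<le> bid_norm a1 * bid_norm b1 * linf_norm f"
    "0 \<le> bid_norm a1 * bid_norm b2 * linf_norm f" "0 \<le> bid_norm a2 * bid_norm b3 * linf_norm f"
    "0 \<le> bid_norm a3 * bid_norm b3 * linf_norm f"
    using nonneg linf_norm_nonneg[OF f] by auto
  have "cmod (entry k (T_mult mult a b) f) \<le> S * linf_norm f"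
  proof -
    have "cmod (arens mult a1 b2 f + arens mult a2 b3 f)
        \<le> cmod (arens mult a1 b2 f) + cmod (arens mult a2 b3 f)"
      by (rule norm_triangle_ineq)
    then show ?thesis
      using terms products_nonneg
      by (auto simp: entry_def T_mult_def ab bid_add_def S_def distrib_right)
  qed
  also have "\<dots> \<le> T_norm a * T_norm b * linf_norm f"
    using S_le linf_norm_nonneg[OF f] by (rule mult_right_mono)
  finally show ?thesis .
qed

section \<open>The multiplication map of \<open>T \<otimes>\<^sub>p T\<close>\<close>

definition entry_form :: "('s \<Rightarrow> 's \<Rightarrow> 's) \<Rightarrow> nat \<Rightarrow> ('s \<Rightarrow> complex) \<Rightarrow> 's tri \<Rightarrow> 's tri \<Rightarrow> complex" where
  "entry_form mult k f =
     (\<lambda>a b. if a \<in> T_carrier \<and> b \<in> T_carrier then entry k (T_mult mult a b) f else 0)"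

definition aug_form :: "nat \<Rightarrow> nat \<Rightarrow> 's tri \<Rightarrow> 's tri \<Rightarrow> complex" where
  "aug_form i j =
     (\<lambda>x y. if x \<in> T_carrier \<and> y \<in> T_carrier
            then augmentation (entry i x) * augmentation (entry j y) else 0)"

lemma bil_norm_T_le:
  fixes \<beta> :: "'s tri \<Rightarrow> 's tri \<Rightarrow> complex"
  assumes "\<And>x y. x \<in> T_carrier \<Longrightarrow> y \<in> T_carrier \<Longrightarrow> T_norm x \<le> 1 \<Longrightarrow> T_norm y \<le> 1 \<Longrightarrow>
    cmod (\<beta> x y) \<le> B"
  shows "bil_norm T_carrier T_norm \<beta> \<le> B"
  unfolding bil_norm_def
proof (rule cSup_least)
  have "cmod (\<beta> T_zero T_zero) \<in>
      {cmod (\<beta> x y) |x y. x \<in> T_carrier \<and> y \<in> T_carrier \<and> T_norm x \<le> 1 \<and> T_norm y \<le> 1}"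
    by (intro CollectI exI[of _ T_zero]) (simp add: T_zero_in_carrier T_norm_T_zero)
  then show "{cmod (\<beta> x y) |x y. x \<in> T_carrier \<and> y \<in> T_carrier \<and> T_norm x \<le> 1 \<and> T_norm y \<le> 1} \<noteq> {}"
    by blast
qed (use assms in blast)

lemma bil_entry_form:
  assumes "f \<in> linf"
  shows "bil T_carrier T_add T_scale T_norm (entry_form mult k f)"
proof -
  have "cmod (entry_form mult k f x y) \<le> linf_norm f * T_norm x * T_norm y"
    if "x \<in> T_carrier" "y \<in> T_carrier" for x y
    using norm_entry_T_mult_le[OF that assms, of k mult] that by (simp add: entry_form_def mult_ac)
  then have "\<exists>K. \<forall>x\<in>T_carrier. \<forall>y\<in>T_carrier. cmod (entry_form mult k f x y) \<le> K * T_norm x * T_norm y"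
    by blast
  then show ?thesis unfolding bil_def
    by (auto simp: entry_form_def T_add_in_carrier T_scale_in_carrier entry_T_mult_add_left
        entry_T_mult_add_right entry_T_mult_scale_left entry_T_mult_scale_right)
qed

lemma bil_norm_entry_form_le:
  fixes f :: "'s \<Rightarrow> complex"
  assumes f: "f \<in> linf" and f1: "linf_norm f \<le> 1"
  shows "bil_norm T_carrier T_norm (entry_form mult k f) \<le> 1"
proof (rule bil_norm_T_le)
  fix x y :: "'s tri"
  assume x: "x \<in> T_carrier" and y: "y \<in> T_carrier" and "T_norm x \<le> 1" "T_norm y \<le> 1"
  have "cmod (entry_form mult k f x y) \<le> T_norm x * T_norm y * linf_norm f"
    using norm_entry_T_mult_le[OF x y f] x y by (simp add: entry_form_def)
  also have "\<dots> \<le> 1 * 1 * 1"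
    using \<open>T_norm x \<le> 1\<close> \<open>T_norm y \<le> 1\<close> f1 T_norm_nonneg[OF x] T_norm_nonneg[OF y]
      linf_norm_nonneg[OF f]
    by (intro mult_mono) auto
  finally show "cmod (entry_form mult k f x y) \<le> 1" by simp
qed

lemma bil_aug_form: "bil T_carrier T_add T_scale T_norm (aug_form i j :: 's tri \<Rightarrow> 's tri \<Rightarrow> complex)"
proof -
  have aug_le: "cmod (augmentation (entry k x)) \<le> T_norm x" if "x \<in> T_carrier" for k and x :: "'s tri"
    using norm_augmentation_le[OF entry_in_bidual[OF that]] bid_norm_entry_le_T_norm[OF that]
    by (rule order_trans)
  have "cmod (aug_form i j x y) \<le> 1 * T_norm x * T_norm y"
    if "x \<in> T_carrier" "y \<in> T_carrier" for x y :: "'s tri"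
    using aug_le[OF that(1), of i] aug_le[OF that(2), of j] that
    by (simp add: aug_form_def norm_mult mult_mono T_norm_nonneg)
  then have "\<exists>K. \<forall>x\<in>T_carrier. \<forall>y\<in>T_carrier.
      cmod ((aug_form i j :: 's tri \<Rightarrow> 's tri \<Rightarrow> complex) x y) \<le> K * T_norm x * T_norm y"
    by blast
  then show ?thesis unfolding bil_def
    by (auto simp: aug_form_def T_add_in_carrier T_scale_in_carrier entry_T_add entry_T_scale
        augmentation_def bid_add_def bid_scale_def algebra_simps)
qed

lemma entry_form_corner_one:
  fixes mult :: "'s \<Rightarrow> 's \<Rightarrow> 's"
  shows "entry_form mult 2 (\<lambda>s. 1) = aug_form 2 2"
proof (intro ext)
  fix x y :: "'s tri"
  show "entry_form mult 2 (\<lambda>s. 1) x y = aug_form 2 2 x y"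
    using augmentation_arens[of "snd (snd x)" "snd (snd y)" mult]
    by (auto simp: entry_form_def aug_form_def entry_def T_mult_def T_carrier_iff augmentation_def)
qed

lemma lsum_in_carrier: "set L \<subseteq> T_carrier \<times> T_carrier \<Longrightarrow> lsum T_zero T_add (T_mult mult) L \<in> T_carrier"
  by (induction L) (auto simp: lsum_def T_zero_in_carrier T_add_in_carrier T_mult_in_carrier)

lemma entry_lsum_eq_tsum:
  "set L \<subseteq> T_carrier \<times> T_carrier \<Longrightarrow>
   entry k (lsum T_zero T_add (T_mult mult) L) f = tsum L (entry_form mult k f)"
proof (induction L)
  case Nil
  then show ?case by (simp add: lsum_def tsum_def entry_T_zero)
next
  case (Cons xy L)
  then show ?case
    by (cases xy) (simp add: lsum_def tsum_def entry_T_add bid_add_def entry_form_def)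
qed

lemma tclose_mono: "tclose C p sc nm u L e \<Longrightarrow> e \<le> e' \<Longrightarrow> tclose C p sc nm u L e'"
  unfolding tclose_def by (meson order_trans)

lemma proj_tensor_T_approx:
  assumes "u \<in> proj_tensor T_carrier T_add T_scale T_norm" "eps > 0"
  obtains L where "set L \<subseteq> T_carrier \<times> T_carrier" "tclose T_carrier T_add T_scale T_norm u L eps"
  using assms unfolding proj_tensor_def by auto

lemma proj_tensor_T_apply_zero:
  assumes u: "u \<in> proj_tensor T_carrier T_add T_scale T_norm"
  shows "u (\<lambda>x y. 0) = 0"
proof (rule complex_eqI_norm_diff_le[where M = 1])
  fix e :: real assume "e > 0"
  then obtain L where L: "tclose T_carrier T_add T_scale T_norm u L e"
    using proj_tensor_T_approx[OF u] by blast
  have "bil T_carrier T_add T_scale T_norm (\<lambda>x y. 0)" unfolding bil_def by (auto intro: exI[of _ 0])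
  moreover have "bil_norm T_carrier T_norm (\<lambda>x y. 0::complex) \<le> 1" by (rule bil_norm_T_le) simp
  moreover have "tsum L (\<lambda>x y. 0) = 0" by (induction L) (auto simp: tsum_def)
  ultimately show "cmod (u (\<lambda>x y. 0) - 0) \<le> 1 * e" using L unfolding tclose_def by auto
qed

text \<open>A tensor \<open>u\<close> is only controlled on bilinear forms of norm at most 1, so \<open>f\<close> is first
  normalised by some \<open>r \<ge> \<parallel>f\<parallel>\<close>; by \<open>scaled_eval_indep\<close> the choice of \<open>r\<close> does not matter.\<close>

definition scaled_eval :: "('s \<Rightarrow> 's \<Rightarrow> 's) \<Rightarrow> 's tri tens \<Rightarrow> nat \<Rightarrow> real \<Rightarrow> ('s \<Rightarrow> complex) \<Rightarrow> complex" where
  "scaled_eval mult u k r f = of_real r * u (entry_form mult k (\<lambda>s. of_real (1 / r) * f s))"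

definition tensor_entry :: "('s \<Rightarrow> 's \<Rightarrow> 's) \<Rightarrow> 's tri tens \<Rightarrow> nat \<Rightarrow> 's bid" where
  "tensor_entry mult u k = (\<lambda>f. if f \<in> linf then scaled_eval mult u k (linf_norm f + 1) f else 0)"

definition tensor_mult :: "('s \<Rightarrow> 's \<Rightarrow> 's) \<Rightarrow> 's tri tens \<Rightarrow> 's tri" where
  "tensor_mult mult u = (tensor_entry mult u 0, tensor_entry mult u 1, tensor_entry mult u 2)"

lemma scaled_eval_approx:
  fixes f :: "'s \<Rightarrow> complex"
  assumes tc: "tclose T_carrier T_add T_scale T_norm u L eps" and L: "set L \<subseteq> T_carrier \<times> T_carrier"
    and f: "f \<in> linf" and r: "r > 0" "linf_norm f \<le> r"
  shows "cmod (scaled_eval mult u k r f - entry k (lsum T_zero T_add (T_mult mult) L) f) \<le> r * eps"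
proof -
  define g where "g = (\<lambda>s. of_real (1 / r) * f s)"
  have g: "g \<in> linf" "linf_norm g \<le> 1"
    unfolding g_def by (rule scale_in_linf[OF f], rule linf_norm_normalize_le_1[OF f r])
  have "cmod (u (entry_form mult k g) - entry k (lsum T_zero T_add (T_mult mult) L) g) \<le> eps"
    using tc bil_entry_form[OF g(1)] bil_norm_entry_form_le[OF g] entry_lsum_eq_tsum[OF L]
    unfolding tclose_def by metis
  moreover have "entry k (lsum T_zero T_add (T_mult mult) L) f
      = of_real r * entry k (lsum T_zero T_add (T_mult mult) L) g"
    using bidualD(2)[OF entry_in_bidual[OF lsum_in_carrier[OF L]] g(1), where c = "of_real r"] r
    by (simp add: g_def)
  moreover have "scaled_eval mult u k r f = of_real r * u (entry_form mult k g)"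
    by (simp add: scaled_eval_def g_def)
  ultimately show ?thesis
    using r by (simp add: right_diff_distrib[symmetric] norm_mult)
qed

lemma scaled_eval_indep:
  fixes f :: "'s \<Rightarrow> complex"
  assumes u: "u \<in> proj_tensor T_carrier T_add T_scale T_norm" and f: "f \<in> linf"
    and r: "r > 0" "linf_norm f \<le> r" and r': "r' > 0" "linf_norm f \<le> r'"
  shows "scaled_eval mult u k r f = scaled_eval mult u k r' f"
proof (rule complex_eqI_norm_diff_le[where M = "r + r'"])
  fix e :: real assume "e > 0"
  then obtain L where L: "set L \<subseteq> T_carrier \<times> T_carrier" "tclose T_carrier T_add T_scale T_norm u L e"
    using proj_tensor_T_approx[OF u] by blast
  let ?c = "entry k (lsum T_zero T_add (T_mult mult) L) f"
  have "cmod (scaled_eval mult u k r f - scaled_eval mult u k r' f)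
      \<le> cmod (scaled_eval mult u k r f - ?c) + cmod (scaled_eval mult u k r' f - ?c)"
    using norm_triangle_ineq4[of "scaled_eval mult u k r f - ?c" "scaled_eval mult u k r' f - ?c"]
    by simp
  also have "\<dots> \<le> r * e + r' * e"
    using scaled_eval_approx[OF L(2) L(1) f r] scaled_eval_approx[OF L(2) L(1) f r'] by (rule add_mono)
  finally show "cmod (scaled_eval mult u k r f - scaled_eval mult u k r' f) \<le> (r + r') * e"
    by (simp add: distrib_right)
qed

lemma tensor_entry_approx:
  fixes f :: "'s \<Rightarrow> complex"
  assumes u: "u \<in> proj_tensor T_carrier T_add T_scale T_norm"
    and tc: "tclose T_carrier T_add T_scale T_norm u L eps" and L: "set L \<subseteq> T_carrier \<times> T_carrier"
    and f: "f \<in> linf" and r: "r > 0" "linf_norm f \<le> r"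
  shows "cmod (tensor_entry mult u k f - entry k (lsum T_zero T_add (T_mult mult) L) f) \<le> r * eps"
proof -
  have "tensor_entry mult u k f = scaled_eval mult u k r f"
    using f scaled_eval_indep[OF u f _ _ r, of "linf_norm f + 1"] linf_norm_nonneg[OF f]
    by (simp add: tensor_entry_def)
  then show ?thesis using scaled_eval_approx[OF tc L f r] by simp
qed

lemma tensor_entry_in_bidual:
  assumes u: "u \<in> proj_tensor T_carrier T_add T_scale T_norm"
  shows "tensor_entry mult u k \<in> bidual"
proof (rule bidual_if_uniformly_approximable)
  show "uniformly_approximable (tensor_entry mult u k)"
    unfolding uniformly_approximable_def
  proof (intro allI impI)
    fix eps :: real assume "eps > 0"
    then obtain L where L: "set L \<subseteq> T_carrier \<times> T_carrier" "tclose T_carrier T_add T_scale T_norm u L eps"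
      using proj_tensor_T_approx[OF u] by blast
    then show "\<exists>c\<in>bidual. \<forall>f\<in>linf. \<forall>r>0. linf_norm f \<le> r \<longrightarrow>
        cmod (tensor_entry mult u k f - c f) \<le> r * eps"
      using tensor_entry_approx[OF u L(2) L(1)] entry_in_bidual[OF lsum_in_carrier[OF L(1)]] by blast
  qed
qed (simp add: tensor_entry_def)

lemma entry_tensor_mult: "entry k (tensor_mult mult u) = tensor_entry mult u k"
proof (cases "k = 0 \<or> k = 1")
  case False
  then have "entry_form mult k = entry_form mult 2"
    by (auto simp: entry_form_def entry_def fun_eq_iff)
  then have "tensor_entry mult u k = tensor_entry mult u 2"
    unfolding tensor_entry_def scaled_eval_def by (simp only:)
  then show ?thesis using False by (simp add: entry_def tensor_mult_def)
qed (auto simp: entry_def tensor_mult_def)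

lemma tensor_mult_in_carrier:
  "u \<in> proj_tensor T_carrier T_add T_scale T_norm \<Longrightarrow> tensor_mult mult u \<in> T_carrier"
  by (simp add: tensor_mult_def T_carrier_iff tensor_entry_in_bidual)

lemma T_norm_tensor_mult_diff_le:
  fixes mult :: "'s \<Rightarrow> 's \<Rightarrow> 's"
  assumes u: "u \<in> proj_tensor T_carrier T_add T_scale T_norm"
    and tc: "tclose T_carrier T_add T_scale T_norm u L eps" and L: "set L \<subseteq> T_carrier \<times> T_carrier"
  shows "T_norm (T_add (tensor_mult mult u) (T_scale (-1) (lsum T_zero T_add (T_mult mult) L))) \<le> 3 * eps"
proof -
  let ?D = "T_add (tensor_mult mult u) (T_scale (-1) (lsum T_zero T_add (T_mult mult) L))"
  have "bid_norm (entry k ?D) \<le> eps" for k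
  proof (rule bid_norm_le)
    fix f :: "'s \<Rightarrow> complex" assume "f \<in> linf" "linf_norm f \<le> 1"
    then show "cmod (entry k ?D f) \<le> eps"
      using tensor_entry_approx[OF u tc L, of f 1 mult k]
      by (simp add: entry_T_add_scale_apply entry_tensor_mult)
  qed
  from this[of 0] this[of 1] this[of 2] show ?thesis unfolding T_norm_eq by linarith
qed

lemma pi_rel_tensor_mult:
  fixes mult :: "'s \<Rightarrow> 's \<Rightarrow> 's"
  assumes u: "u \<in> proj_tensor T_carrier T_add T_scale T_norm"
  shows "pi_rel T_carrier T_zero T_add T_scale (T_mult mult) T_norm u (tensor_mult mult u)"
  unfolding pi_rel_def
proof (intro conjI allI impI)
  fix eps :: real assume "eps > 0"
  then obtain L where L: "set L \<subseteq> T_carrier \<times> T_carrier" "tclose T_carrier T_add T_scale T_norm u L (eps / 3)"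
    using proj_tensor_T_approx[OF u, of "eps / 3"] by auto
  then show "\<exists>L. set L \<subseteq> T_carrier \<times> T_carrier \<and> tclose T_carrier T_add T_scale T_norm u L eps \<and>
      T_norm (T_add (tensor_mult mult u) (T_scale (- 1) (lsum T_zero T_add (T_mult mult) L))) \<le> eps"
    using T_norm_tensor_mult_diff_le[OF u L(2) L(1)] tclose_mono[OF L(2)] \<open>eps > 0\<close> by auto
qed (rule tensor_mult_in_carrier[OF u])

lemma pi_rel_unique:
  fixes mult :: "'s \<Rightarrow> 's \<Rightarrow> 's"
  assumes u: "u \<in> proj_tensor T_carrier T_add T_scale T_norm"
    and x: "pi_rel T_carrier T_zero T_add T_scale (T_mult mult) T_norm u x"
  shows "x = tensor_mult mult u"
proof (rule T_eqI, rule ext)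
  fix k and f :: "'s \<Rightarrow> complex"
  have xC: "x \<in> T_carrier" using x by (simp add: pi_rel_def)
  show "entry k x f = entry k (tensor_mult mult u) f"
  proof (cases "f \<in> linf")
    case False
    then show ?thesis
      using bidualD(4)[OF entry_in_bidual[OF xC]] bidualD(4)[OF entry_in_bidual[OF tensor_mult_in_carrier[OF u]]]
      by simp
  next
    case f: True
    show ?thesis
    proof (rule complex_eqI_norm_diff_le[where M = "4 * linf_norm f"])
      fix e :: real assume "e > 0"
      then obtain L where L: "set L \<subseteq> T_carrier \<times> T_carrier" "tclose T_carrier T_add T_scale T_norm u L e"
        "T_norm (T_add x (T_scale (-1) (lsum T_zero T_add (T_mult mult) L))) \<le> e"
        using x unfolding pi_rel_def by blast
      let ?l = "lsum T_zero T_add (T_mult mult) L"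
      have lC: "?l \<in> T_carrier" by (rule lsum_in_carrier[OF L(1)])
      have "cmod (entry k x f - entry k ?l f) \<le> T_norm (T_add x (T_scale (-1) ?l)) * linf_norm f"
        using norm_entry_apply_le[OF T_add_in_carrier[OF xC T_scale_in_carrier[OF lC, where c = "-1"]] f, of k]
        by (simp add: entry_T_add_scale_apply)
      also have "\<dots> \<le> e * linf_norm f"
        using L(3) linf_norm_nonneg[OF f] by (rule mult_right_mono)
      finally have x_close: "cmod (entry k x f - entry k ?l f) \<le> e * linf_norm f" .
      have "cmod (entry k (tensor_mult mult u) f - entry k ?l f)
          \<le> T_norm (T_add (tensor_mult mult u) (T_scale (-1) ?l)) * linf_norm f"
        using norm_entry_apply_le[OF T_add_in_carrier[OF tensor_mult_in_carrier[OF u]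
            T_scale_in_carrier[OF lC, where c = "-1"]] f, of k]
        by (simp add: entry_T_add_scale_apply)
      also have "\<dots> \<le> 3 * e * linf_norm f"
        using T_norm_tensor_mult_diff_le[OF u L(2) L(1)] linf_norm_nonneg[OF f] by (rule mult_right_mono)
      finally have "cmod (entry k (tensor_mult mult u) f - entry k ?l f) \<le> 3 * e * linf_norm f" .
      moreover note x_close
      ultimately show "cmod (entry k x f - entry k (tensor_mult mult u) f) \<le> 4 * linf_norm f * e"
        using norm_triangle_ineq4[of "entry k x f - entry k ?l f" "entry k (tensor_mult mult u) f - entry k ?l f"]
        by (simp add: algebra_simps)
    qed
  qed
qed

lemma pi_B_eq_tensor_mult:
  fixes mult :: "'s \<Rightarrow> 's \<Rightarrow> 's"
  assumes u: "u \<in> proj_tensor T_carrier T_add T_scale T_norm"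
  shows "pi_B T_carrier T_zero T_add T_scale (T_mult mult) T_norm u = tensor_mult mult u"
  unfolding pi_B_def
  by (rule the_equality) (rule pi_rel_tensor_mult[OF u], erule pi_rel_unique[OF u])

lemma augmentation_corner_pi_B:
  fixes mult :: "'s \<Rightarrow> 's \<Rightarrow> 's"
  assumes u: "u \<in> proj_tensor T_carrier T_add T_scale T_norm"
  shows "augmentation (entry 2 (pi_B T_carrier T_zero T_add T_scale (T_mult mult) T_norm u)) = u (aug_form 2 2)"
proof -
  have one: "(\<lambda>s::'s. 1::complex) \<in> linf" "linf_norm (\<lambda>s::'s. 1::complex) \<le> 1"
    by (auto intro: const_in_linf linf_norm_le)
  have "tensor_entry mult u 2 (\<lambda>s. 1) = scaled_eval mult u 2 (linf_norm (\<lambda>s::'s. 1::complex) + 1) (\<lambda>s. 1)"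
    using one(1) by (simp add: tensor_entry_def)
  also have "\<dots> = scaled_eval mult u 2 1 (\<lambda>s. 1)"
    by (rule scaled_eval_indep[OF u one(1)]) (use one linf_norm_nonneg[OF one(1)] in auto)
  finally have "tensor_entry mult u 2 (\<lambda>s. 1) = scaled_eval mult u 2 1 (\<lambda>s. 1)" .
  then show ?thesis
    by (simp add: pi_B_eq_tensor_mult[OF u] entry_tensor_mult augmentation_def scaled_eval_def
        entry_form_corner_one)
qed

section \<open>Bimodule morphisms into \<open>T \<otimes>\<^sub>p T\<close>\<close>

lemma aug_form_left_translate_corner:
  fixes mult :: "'s \<Rightarrow> 's \<Rightarrow> 's"
  assumes E: "E \<in> bidual" "augmentation E = 1"
  shows "(\<lambda>x y. if x \<in> T_carrier \<and> y \<in> T_carrier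
            then aug_form 1 2 (T_mult mult ((\<lambda>f. 0), E, (\<lambda>f. 0)) x) y else 0) = aug_form 2 2"
proof (intro ext)
  fix x y :: "'s tri"
  let ?X = "((\<lambda>f. 0), E, (\<lambda>f. 0)) :: 's tri"
  have X: "?X \<in> T_carrier" by (simp add: T_carrier_iff E(1) zero_in_bidual)
  have "augmentation (entry 1 (T_mult mult ?X x)) = augmentation (entry 2 x)" if "x \<in> T_carrier"
    using that augmentation_arens[OF E(1), of "snd (snd x)" mult]
    by (simp add: entry_def T_mult_def arens_zero_left bid_add_def T_carrier_iff E(2))
  then show "(if x \<in> T_carrier \<and> y \<in> T_carrier then aug_form 1 2 (T_mult mult ?X x) y else 0)
      = aug_form 2 2 x y"
    using T_mult_in_carrier[OF X, of x mult] by (auto simp: aug_form_def)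
qed

lemma aug_form_right_translate_corner:
  fixes mult :: "'s \<Rightarrow> 's \<Rightarrow> 's"
  shows "(\<lambda>x y. if x \<in> T_carrier \<and> y \<in> T_carrier
            then aug_form 1 2 x (T_mult mult y ((\<lambda>f. 0), E, (\<lambda>f. 0))) else 0) = (\<lambda>x y. 0)"
proof (intro ext)
  fix x y :: "'s tri"
  have "augmentation (entry 2 (T_mult mult y ((\<lambda>f. 0), E, (\<lambda>f. 0)))) = 0" if "y \<in> T_carrier"
    using that arens_zero_right[of "snd (snd y)" mult]
    by (simp add: entry_def T_mult_def T_carrier_iff augmentation_def)
  then show "(if x \<in> T_carrier \<and> y \<in> T_carrier
      then aug_form 1 2 x (T_mult mult y ((\<lambda>f. 0), E, (\<lambda>f. 0))) else 0) = 0"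
    by (auto simp: aug_form_def)
qed

lemma bimod_morph_corner_vanishes:
  fixes mult :: "'s \<Rightarrow> 's \<Rightarrow> 's"
  assumes \<rho>: "bimod_morph T_carrier T_add T_scale (T_mult mult) T_norm \<rho>"
    and E: "E \<in> bidual" "arens mult E E = E" "augmentation E = 1"
  shows "\<rho> ((\<lambda>f. 0), (\<lambda>f. 0), E) (aug_form 2 2) = 0"
proof -
  define Z :: "'s bid" where "Z = (\<lambda>f. 0)"
  define P where "P = (E, Z, Z)"
  define Q where "Q = (Z, Z, E)"
  define X where "X = (Z, E, Z)"
  have carrier: "P \<in> T_carrier" "Q \<in> T_carrier" "X \<in> T_carrier"
    by (auto simp: P_def Q_def X_def Z_def T_carrier_iff E(1) zero_in_bidual)
  have module: "\<forall>a\<in>T_carrier. \<forall>b\<in>T_carrier.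
      \<rho> (T_mult mult a b) = lmod T_carrier T_add T_scale (T_mult mult) T_norm a (\<rho> b) \<and>
      \<rho> (T_mult mult b a) = rmod T_carrier T_add T_scale (T_mult mult) T_norm (\<rho> b) a"
    using \<rho> unfolding bimod_morph_def by (elim conjE)
  have "T_mult mult X Q = X" "T_mult mult P X = X"
    by (simp_all add: T_mult_def X_def Q_def P_def Z_def arens_zero_left arens_zero_right[OF E(1)]
        bid_add_def E(2))
  then have left: "\<rho> X = lmod T_carrier T_add T_scale (T_mult mult) T_norm X (\<rho> Q)"
    and right: "\<rho> X = rmod T_carrier T_add T_scale (T_mult mult) T_norm (\<rho> P) X"
    using module[rule_format, OF carrier(3) carrier(2)] module[rule_format, OF carrier(3) carrier(1)]
    by simp_all
  have "\<rho> X (aug_form 1 2) = \<rho> Q (aug_form 2 2)"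
    using aug_form_left_translate_corner[OF E(1,3), of mult, folded Z_def, folded X_def]
    by (simp only: left lmod_def if_P[OF bil_aug_form])
  moreover have "\<rho> P \<in> proj_tensor T_carrier T_add T_scale T_norm"
    using \<rho> carrier(1) by (simp add: bimod_morph_def)
  then have "\<rho> X (aug_form 1 2) = 0"
    using aug_form_right_translate_corner[of mult E, folded Z_def, folded X_def]
    by (simp only: right rmod_def if_P[OF bil_aug_form] proj_tensor_T_apply_zero)
  ultimately show ?thesis by (simp add: Q_def Z_def)
qed

lemma inverse_semigroup_has_idempotent:
  assumes "inverse_semigroup mult"
  shows "\<exists>e. mult e e = e"
proof -
  obtain s t where t: "mult (mult s t) s = s" using assms unfolding inverse_semigroup_def by blast
  have "mult (mult s t) (mult s t) = mult (mult (mult s t) s) t"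
    using assms by (simp add: inverse_semigroup_def)
  then show ?thesis using t by auto
qed

lemma approx_biprojectiveD:
  assumes "approx_biprojective TYPE('i) C z p sc m nm" "b \<in> C" "eps > 0"
  obtains \<rho> where "bimod_morph C p sc m nm \<rho>" "nm (p (pi_B C z p sc m nm (\<rho> b)) (sc (-1) b)) < eps"
proof -
  obtain I :: "'i set" and le \<rho> where "\<forall>i\<in>I. le i i" "\<forall>i\<in>I. bimod_morph C p sc m nm (\<rho> i)"
    "\<forall>b\<in>C. \<forall>eps>0. \<exists>i0\<in>I. \<forall>i\<in>I. le i0 i \<longrightarrow> nm (p (pi_B C z p sc m nm (\<rho> i b)) (sc (-1) b)) < eps"
    using assms(1) unfolding approx_biprojective_def by blast
  then show ?thesis using assms(2,3) that by metis
qed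

lemma T_norm_pi_B_corner_diff_ge_1:
  fixes mult :: "'s \<Rightarrow> 's \<Rightarrow> 's"
  assumes \<rho>: "bimod_morph T_carrier T_add T_scale (T_mult mult) T_norm \<rho>"
    and E: "E \<in> bidual" "arens mult E E = E" "augmentation E = 1"
    and Q_def: "Q = ((\<lambda>f. 0), (\<lambda>f. 0), E)"
  shows "1 \<le> T_norm (T_add (pi_B T_carrier T_zero T_add T_scale (T_mult mult) T_norm (\<rho> Q)) (T_scale (-1) Q))"
proof -
  have Q: "Q \<in> T_carrier" by (simp add: Q_def T_carrier_iff zero_in_bidual E(1))
  then have u: "\<rho> Q \<in> proj_tensor T_carrier T_add T_scale T_norm" using \<rho> by (simp add: bimod_morph_def)
  let ?D = "T_add (pi_B T_carrier T_zero T_add T_scale (T_mult mult) T_norm (\<rho> Q)) (T_scale (-1) Q)"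
  have D: "?D \<in> T_carrier"
    using T_add_in_carrier[OF tensor_mult_in_carrier[OF u] T_scale_in_carrier[OF Q, where c = "-1"]]
    by (simp add: pi_B_eq_tensor_mult[OF u])
  have "augmentation (entry 2 ?D)
      = augmentation (entry 2 (pi_B T_carrier T_zero T_add T_scale (T_mult mult) T_norm (\<rho> Q)))
        - augmentation (entry 2 Q)"
    by (simp add: augmentation_def entry_T_add_scale_apply)
  also have "\<dots> = -1"
    using augmentation_corner_pi_B[OF u] bimod_morph_corner_vanishes[OF \<rho> E] E(3)
    by (simp add: Q_def entry_def)
  finally have "1 \<le> bid_norm (entry 2 ?D)"
    using norm_augmentation_le[OF entry_in_bidual[OF D, of 2]] by simp
  also have "\<dots> \<le> T_norm ?D" by (rule bid_norm_entry_le_T_norm[OF D])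
  finally show ?thesis .
qed

theorem mainTheorem11:
  fixes mult :: "'s \<Rightarrow> 's \<Rightarrow> 's"
  assumes "clifford_semigroup mult"
    and "uniformly_locally_finite mult"
  shows "\<not> approx_biprojective TYPE('i) T_carrier T_zero T_add T_scale (T_mult mult) T_norm"
proof
  assume approx: "approx_biprojective TYPE('i) T_carrier T_zero T_add T_scale (T_mult mult) T_norm"
  obtain e where "mult e e = e"
    using assms(1) inverse_semigroup_has_idempotent by (auto simp: clifford_semigroup_def)
  then have E: "point_mass e \<in> bidual" "arens mult (point_mass e) (point_mass e) = point_mass e"
    "augmentation (point_mass e) = 1"
    by (simp_all add: point_mass_in_bidual arens_point_mass augmentation_point_mass)
  define Q :: "'s tri" where "Q = ((\<lambda>f. 0), (\<lambda>f. 0), point_mass e)"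
  have "Q \<in> T_carrier" by (simp add: Q_def T_carrier_iff zero_in_bidual E(1))
  then obtain \<rho> where \<rho>: "bimod_morph T_carrier T_add T_scale (T_mult mult) T_norm \<rho>"
    and "T_norm (T_add (pi_B T_carrier T_zero T_add T_scale (T_mult mult) T_norm (\<rho> Q)) (T_scale (-1) Q)) < 1"
    using approx_biprojectiveD[OF approx, of Q 1] by auto
  with T_norm_pi_B_corner_diff_ge_1[OF \<rho> E Q_def] show False by simp
qed

end
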